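(* For $n=2$ the representation $\theta:FVB_2\to{\rm Aut}(F_4)$ is faithful.
   Context: $FVB_2$ is the group $\langle\sigma_1,\rho_1\mid \sigma_1^2=\rho_1^2=1\rangle$. $F_4$ is free on $x_1,x_2,y_1,y_2$, and $\theta$ is the homomorphism determined by $\theta(\sigma_1):x_1\mapsto x_2y_2,\ x_2\mapsto x_1y_2^{-1},\ y_1\mapsto y_1,\ y_2\mapsto y_2$ and $\theta(\rho_1):x_1\mapsto x_2,\ x_2\mapsto x_1,\ y_1\mapsto y_2,\ y_2\mapsto y_1$. Automorphisms are composed on the right: $(fg)(x)=g(f(x))$. *)

theory Defs
  imports Main
begin

datatype gen = X1 | X2 | Y1 | Y2

text \<open>A letter is a generator with an exponent sign: True = +1, False = -1.\<close>
type_synonym letter = "gen \<times> bool"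
type_synonym word = "letter list"

definition cancels :: "letter \<Rightarrow> letter \<Rightarrow> bool" where
  "cancels a b \<longleftrightarrow> fst a = fst b \<and> snd a \<noteq> snd b"

fun red :: "word \<Rightarrow> word" where
  "red [] = []"
| "red (a # w) = (case red w of [] \<Rightarrow> [a]
                   | b # w' \<Rightarrow> (if cancels a b then w' else a # b # w'))"

text \<open>Elements of F_4 are the reduced words.\<close>
definition reduced :: "word \<Rightarrow> bool" where
  "reduced v \<longleftrightarrow> (\<forall>i. Suc i < length v \<longrightarrow> \<not> cancels (v ! i) (v ! Suc i))"

definition winv :: "word \<Rightarrow> word" where
  "winv w = rev (map (\<lambda>(g, b). (g, \<not> b)) w)"

definition img :: "(gen \<Rightarrow> word) \<Rightarrow> letter \<Rightarrow> word" where
  "img f a = (if snd a then f (fst a) else winv (f (fst a)))"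

definition endo :: "(gen \<Rightarrow> word) \<Rightarrow> word \<Rightarrow> word" where
  "endo f v = red (concat (map (img f) v))"

datatype fvb_gen = Sig | Rho

text \<open>Words in the generators; since both generators are involutions, the group is
  the monoid presented by these generators and the relations s s = 1. Two words
  represent the same element of FVB_2 iff they are related by the congruence
  generated by these relations.\<close>
inductive fvb_equiv :: "fvb_gen list \<Rightarrow> fvb_gen list \<Rightarrow> bool" where
  fvb_refl: "fvb_equiv w w"
| fvb_sym: "fvb_equiv w u \<Longrightarrow> fvb_equiv u w"
| fvb_trans: "fvb_equiv w u \<Longrightarrow> fvb_equiv u z \<Longrightarrow> fvb_equiv w z"
| fvb_rel: "fvb_equiv (p @ [s, s] @ q) (p @ q)"

fun theta_gen :: "fvb_gen \<Rightarrow> gen \<Rightarrow> word" where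
  "theta_gen Sig X1 = [(X2, True), (Y2, True)]"
| "theta_gen Sig X2 = [(X1, True), (Y2, False)]"
| "theta_gen Sig Y1 = [(Y1, True)]"
| "theta_gen Sig Y2 = [(Y2, True)]"
| "theta_gen Rho X1 = [(X2, True)]"
| "theta_gen Rho X2 = [(X1, True)]"
| "theta_gen Rho Y1 = [(Y2, True)]"
| "theta_gen Rho Y2 = [(Y1, True)]"

text \<open>theta of the word s_1 ... s_k, applied to v.  Automorphisms compose on the
  right, (fg)(x) = g(f(x)), so theta(s_1) is applied first.\<close>
definition theta :: "fvb_gen list \<Rightarrow> word \<Rightarrow> word" where
  "theta w v = foldl (\<lambda>v s. endo (theta_gen s) v) v w"

end

theory Submission
  imports Defs
begin

text \<open>Abelianizing F_4 and keeping only x_1 - x_2 and y_1 + y_2 turns theta into the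
  action of FVB_2 on Z^2 where sigma_1 sends (d, s) to (-d, s + d) and rho_1 sends it to
  (-d, s). Every element of FVB_2 is an alternating word in sigma_1, rho_1; such a word of
  signed length t (positive if it starts with sigma_1) moves (1, 0) to
  ((-1)^t, floor((t + 1) / 2)), from which t, and hence the word, can be read off.\<close>

fun exp_sum :: "gen \<Rightarrow> word \<Rightarrow> int" where
  "exp_sum g [] = 0"
| "exp_sum g ((h, b) # w) = (if h = g then (if b then 1 else -1) else 0) + exp_sum g w"

lemma exp_sum_append [simp]: "exp_sum g (v @ w) = exp_sum g v + exp_sum g w"
  by (induction v rule: exp_sum.induct) auto

lemma exp_sum_winv [simp]: "exp_sum g (winv w) = - exp_sum g w"
  by (induction w rule: exp_sum.induct) (auto simp: winv_def)

lemma exp_sum_red [simp]: "exp_sum g (red w) = exp_sum g w"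
proof (induction w)
  case Nil
  then show ?case by simp
next
  case (Cons a w)
  then show ?case
    by (cases "red w"; cases a; auto simp: cancels_def split: if_splits)
qed

lemma exp_sum_endo:
  "exp_sum g (endo f v) =
     exp_sum X1 v * exp_sum g (f X1) + exp_sum X2 v * exp_sum g (f X2) +
     exp_sum Y1 v * exp_sum g (f Y1) + exp_sum Y2 v * exp_sum g (f Y2)"
  unfolding endo_def exp_sum_red
proof (induction v)
  case (Cons a v)
  obtain h b where "a = (h, b)" by fastforce
  with Cons show ?case by (cases h; cases b) (auto simp: img_def algebra_simps)
qed simp

definition abel_coords :: "word \<Rightarrow> int \<times> int" where
  "abel_coords v = (exp_sum X1 v - exp_sum X2 v, exp_sum Y1 v + exp_sum Y2 v)"

fun fvb_act :: "int \<times> int \<Rightarrow> fvb_gen \<Rightarrow> int \<times> int" where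
  "fvb_act (d, s) Sig = (- d, s + d)"
| "fvb_act (d, s) Rho = (- d, s)"

lemma abel_coords_endo_theta_gen:
  "abel_coords (endo (theta_gen a) v) = fvb_act (abel_coords v) a"
  by (cases a) (simp_all add: abel_coords_def exp_sum_endo)

lemma abel_coords_theta: "abel_coords (theta w v) = foldl fvb_act (abel_coords v) w"
  by (induction w arbitrary: v) (simp_all add: theta_def abel_coords_endo_theta_gen)

lemma fvb_act_fvb_act [simp]: "fvb_act (fvb_act x a) a = x"
  by (cases x; cases a) auto

lemma foldl_fvb_act_fvb_equiv: "fvb_equiv w u \<Longrightarrow> foldl fvb_act x w = foldl fvb_act x u"
  by (induction arbitrary: x rule: fvb_equiv.induct) auto

lemma fvb_equiv_Cons: "fvb_equiv w u \<Longrightarrow> fvb_equiv (a # w) (a # u)"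
proof (induction rule: fvb_equiv.induct)
  case (fvb_rel p s q)
  then show ?case using fvb_equiv.fvb_rel[of "a # p" s q] by simp
qed (auto intro: fvb_equiv.intros)

fun other :: "fvb_gen \<Rightarrow> fvb_gen" where
  "other Sig = Rho"
| "other Rho = Sig"

fun alternating :: "fvb_gen \<Rightarrow> nat \<Rightarrow> fvb_gen list" where
  "alternating a 0 = []"
| "alternating a (Suc n) = a # alternating (other a) n"

lemma fvb_equiv_alternating: "\<exists>a n. fvb_equiv w (alternating a n)"
proof (induction w)
  case Nil
  show ?case by (metis fvb_equiv.fvb_refl alternating.simps(1))
next
  case (Cons a w)
  then obtain c k where "fvb_equiv w (alternating c k)" by blast
  then have equiv: "fvb_equiv (a # w) (a # alternating c k)" by (rule fvb_equiv_Cons)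
  show ?case
  proof (cases "k = 0 \<or> c \<noteq> a")
    case True
    then have "a # alternating c k = alternating a (Suc k)"
      by (cases k; cases a; cases c) auto
    then show ?thesis using equiv by metis
  next
    case False
    then obtain n where "a # alternating c k = [a, a] @ alternating (other a) n"
      by (cases k) auto
    then have "fvb_equiv (a # alternating c k) (alternating (other a) n)"
      using fvb_equiv.fvb_rel[of "[]"] by simp
    then show ?thesis using equiv fvb_equiv.fvb_trans by blast
  qed
qed

definition signed_length :: "fvb_gen \<Rightarrow> nat \<Rightarrow> int" where
  "signed_length a n = (if a = Sig then int n else - int n)"

lemma foldl_fvb_act_alternating:
  "foldl fvb_act (d, s) (alternating a n) =
     (d * (-1) ^ n, s + d * ((signed_length a n + 1) div 2))"
proof (induction n arbitrary: a d s)
  case (Suc n)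
  show ?case
  proof (cases a)
    case Sig
    have "(- int n + 1) div 2 = - (int n div 2)" by presburger
    moreover have "(int n + 2) div 2 = int n div 2 + 1" by presburger
    ultimately show ?thesis using Suc[where a = Rho and d = "- d" and s = "s + d"] Sig
      by (simp add: signed_length_def algebra_simps)
  next
    case Rho
    have "(- int n + 1) div 2 = - (int n div 2)" by presburger
    moreover have "(- int (Suc n) + 1) div 2 = - ((int n + 1) div 2)" by presburger
    ultimately show ?thesis using Suc[where a = Sig and d = "- d" and s = s] Rho
      by (simp add: signed_length_def algebra_simps)
  qed
qed (simp add: signed_length_def)

lemma signed_length_eq_if_foldl_fvb_act_eq:
  assumes "foldl fvb_act (1, 0) (alternating a n) = foldl fvb_act (1, 0) (alternating b m)"
  shows "signed_length a n = signed_length b m"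
proof -
  have "(-1::int) ^ n = (-1) ^ m"
    and half: "(signed_length a n + 1) div 2 = (signed_length b m + 1) div 2"
    using assms by (simp_all add: foldl_fvb_act_alternating)
  then have "even n \<longleftrightarrow> even m"
    by (metis neg_one_even_power neg_one_odd_power one_neq_neg_one)
  moreover have "even (signed_length a n) \<longleftrightarrow> even n" "even (signed_length b m) \<longleftrightarrow> even m"
    by (simp_all add: signed_length_def)
  ultimately show ?thesis using half by presburger
qed

lemma alternating_eq_if_signed_length_eq:
  "signed_length a n = signed_length b m \<Longrightarrow> alternating a n = alternating b m"
  by (cases n; cases m; cases a; cases b) (auto simp: signed_length_def)

theorem proposition7:
  fixes w u :: "fvb_gen list"
  assumes "\<forall>v. reduced v \<longrightarrow> theta w v = theta u v"
  shows "fvb_equiv w u"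
proof -
  have "reduced [(X1, True)]" by (simp add: reduced_def)
  then have "theta w [(X1, True)] = theta u [(X1, True)]" using assms by blast
  moreover have "abel_coords [(X1, True)] = (1, 0)" by (simp add: abel_coords_def)
  ultimately have orbit: "foldl fvb_act (1, 0) w = foldl fvb_act (1, 0) u"
    by (metis abel_coords_theta)
  obtain a n where w: "fvb_equiv w (alternating a n)" using fvb_equiv_alternating by blast
  obtain b m where u: "fvb_equiv u (alternating b m)" using fvb_equiv_alternating by blast
  have "foldl fvb_act (1, 0) (alternating a n) = foldl fvb_act (1, 0) (alternating b m)"
    using orbit w u foldl_fvb_act_fvb_equiv by metis
  then have "alternating a n = alternating b m"
    by (intro alternating_eq_if_signed_length_eq signed_length_eq_if_foldl_fvb_act_eq)
  with w u show ?thesis by (metis fvb_equiv.fvb_sym fvb_equiv.fvb_trans)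
qed

end
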